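(* For every $A\in\mathsf{TNNIL}$: (1) $\mathsf{LLe}^+\vdash\boxdot A^l\leftrightarrow\boxdot A^\Box$; (2) $\mathsf{LLe}^+\vdash A^\Box\to A$; (3) if $A\in\mathsf{NOI}$ then $\mathsf{LLe}^+\vdash A^\Box\leftrightarrow A$; (4) $\mathsf{LLe}^+\vdash\Box A\leftrightarrow\Box A^\Box$.
   Context: Modal language: propositional variables, $\bot$, $\wedge,\vee,\to$, $\Box$; atomic = variables and $\bot$; $\boxdot A:=A\wedge\Box A$. $\mathsf{iGL}$: intuitionistic propositional logic in the modal language plus $\Box(A\to B)\to(\Box A\to\Box B)$, $\Box A\to\Box\Box A$, $\Box(\Box A\to A)\to\Box A$, closed under modus ponens and necessitation. $\mathsf{NOI}$: propositions in which every $\to$ is in the scope of a $\Box$. Leivant's translation: $A^l=A$ for atomic/boxed $A$; $(A\wedge B)^l=A^l\wedge B^l$; $(A\vee B)^l=\boxdot A^l\vee\boxdot B^l$; $(A\to B)^l=A\to B^l$ if $A\in\mathsf{NOI}$, else $A\to B$. $\mathsf{LLe}^+:=\mathsf{iGL}+\{\Box A\to\Box A^l\}+\{p\to\Box p: p\text{ atomic}\}$. $\mathsf{TNNIL}$: smallest class containing atomic propositions, closed under $\wedge,\vee,\Box$, and containing $A\to B$ whenever $A,B\in\mathsf{TNNIL}$ and $A\in\mathsf{NOI}$. Box-translation: $A^\Box:=A\wedge\Box A$ for atomic $A$; $(A\circ B)^\Box:=A^\Box\circ B^\Box$ for $\circ\in\{\wedge,\vee\}$; $(A\to B)^\Box:=(A^\Box\to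 B^\Box)\wedge\Box(A^\Box\to B^\Box)$; $(\Box A)^\Box:=\Box(A^\Box)$. *)

theory Defs
  imports Main
begin

datatype fm = Var nat | Bot | And fm fm | Or fm fm | Imp fm fm | Box fm

fun atomic :: "fm \<Rightarrow> bool" where
  "atomic (Var n) = True"
| "atomic Bot = True"
| "atomic _ = False"

definition Iff :: "fm \<Rightarrow> fm \<Rightarrow> fm" where
  "Iff A B = And (Imp A B) (Imp B A)"

definition boxdot :: "fm \<Rightarrow> fm" where
  "boxdot A = And A (Box A)"

fun NOI :: "fm \<Rightarrow> bool" where
  "NOI (Var n) = True"
| "NOI Bot = True"
| "NOI (And A B) = (NOI A \<and> NOI B)"
| "NOI (Or A B) = (NOI A \<and> NOI B)"
| "NOI (Imp A B) = False"
| "NOI (Box A) = True"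

fun leiv :: "fm \<Rightarrow> fm" where
  "leiv (Var n) = Var n"
| "leiv Bot = Bot"
| "leiv (Box A) = Box A"
| "leiv (And A B) = And (leiv A) (leiv B)"
| "leiv (Or A B) = Or (boxdot (leiv A)) (boxdot (leiv B))"
| "leiv (Imp A B) = (if NOI A then Imp A (leiv B) else Imp A B)"

fun boxtr :: "fm \<Rightarrow> fm" where
  "boxtr (Var n) = And (Var n) (Box (Var n))"
| "boxtr Bot = And Bot (Box Bot)"
| "boxtr (And A B) = And (boxtr A) (boxtr B)"
| "boxtr (Or A B) = Or (boxtr A) (boxtr B)"
| "boxtr (Imp A B) = And (Imp (boxtr A) (boxtr B)) (Box (Imp (boxtr A) (boxtr B)))"
| "boxtr (Box A) = Box (boxtr A)"

inductive TNNIL :: "fm \<Rightarrow> bool" where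
  tn_atom: "atomic A \<Longrightarrow> TNNIL A"
| tn_and: "TNNIL A \<Longrightarrow> TNNIL B \<Longrightarrow> TNNIL (And A B)"
| tn_or: "TNNIL A \<Longrightarrow> TNNIL B \<Longrightarrow> TNNIL (Or A B)"
| tn_box: "TNNIL A \<Longrightarrow> TNNIL (Box A)"
| tn_imp: "TNNIL A \<Longrightarrow> TNNIL B \<Longrightarrow> NOI A \<Longrightarrow> TNNIL (Imp A B)"

inductive LLe_plus :: "fm \<Rightarrow> bool" where
  ax_k: "LLe_plus (Imp A (Imp B A))"
| ax_s: "LLe_plus (Imp (Imp A (Imp B C)) (Imp (Imp A B) (Imp A C)))"
| ax_and1: "LLe_plus (Imp (And A B) A)"
| ax_and2: "LLe_plus (Imp (And A B) B)"
| ax_andI: "LLe_plus (Imp A (Imp B (And A B)))"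
| ax_or1: "LLe_plus (Imp A (Or A B))"
| ax_or2: "LLe_plus (Imp B (Or A B))"
| ax_orE: "LLe_plus (Imp (Imp A C) (Imp (Imp B C) (Imp (Or A B) C)))"
| ax_efq: "LLe_plus (Imp Bot A)"
| ax_K: "LLe_plus (Imp (Box (Imp A B)) (Imp (Box A) (Box B)))"
| ax_4: "LLe_plus (Imp (Box A) (Box (Box A)))"
| ax_L: "LLe_plus (Imp (Box (Imp (Box A) A)) (Box A))"
| ax_Le: "LLe_plus (Imp (Box A) (Box (leiv A)))"
| ax_cp: "atomic p \<Longrightarrow> LLe_plus (Imp p (Box p))"
| mp: "LLe_plus (Imp A B) \<Longrightarrow> LLe_plus A \<Longrightarrow> LLe_plus B"
| nec: "LLe_plus A \<Longrightarrow> LLe_plus (Box A)"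

end

theory Submission
  imports Defs
begin

text \<open>By induction on TNNIL, proving clauses (1)--(3) simultaneously; clause (4) for \<open>A\<close>
  follows from (1) and (2) for \<open>A\<close> and is needed in the \<open>\<box>\<close> case.  The two facts that drive
  the induction are that \<open>A\<^sup>\<box>\<close> always proves \<open>\<box>A\<^sup>\<box>\<close>, so \<open>\<boxdot>A\<^sup>\<box>\<close> and \<open>A\<^sup>\<box>\<close> coincide, and
  that for \<open>A \<in> NOI\<close> the equivalence \<open>A \<leftrightarrow> A\<^sup>\<box>\<close> makes \<open>A\<close> self-boxing; the latter is what
  lets \<open>\<boxdot>(A \<rightarrow> B\<^sup>l)\<close> prove \<open>A \<rightarrow> \<boxdot>B\<^sup>l\<close> in the implication case.\<close>

abbreviation derivable :: "fm \<Rightarrow> bool" ("\<turnstile> _" [20] 20) where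
  "\<turnstile> X \<equiv> LLe_plus X"

lemma imp_weaken: "\<turnstile> X \<Longrightarrow> \<turnstile> Imp H X"
  by (rule mp[OF ax_k])

lemma imp_mp: "\<turnstile> Imp H (Imp X Y) \<Longrightarrow> \<turnstile> Imp H X \<Longrightarrow> \<turnstile> Imp H Y"
  by (rule mp[OF mp[OF ax_s]])

lemma imp_refl: "\<turnstile> Imp A A"
  by (rule imp_mp[OF ax_k ax_k[where B = A]])

lemma imp_trans: "\<turnstile> Imp A B \<Longrightarrow> \<turnstile> Imp B C \<Longrightarrow> \<turnstile> Imp A C"
  by (rule imp_mp[OF imp_weaken])

lemma and_elim1: "\<turnstile> Imp H (And A B) \<Longrightarrow> \<turnstile> Imp H A"
  using imp_trans ax_and1 by blast

lemma and_elim2: "\<turnstile> Imp H (And A B) \<Longrightarrow> \<turnstile> Imp H B"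
  using imp_trans ax_and2 by blast

lemma and_intro: "\<turnstile> Imp H A \<Longrightarrow> \<turnstile> Imp H B \<Longrightarrow> \<turnstile> Imp H (And A B)"
  by (rule imp_mp[OF imp_mp[OF imp_weaken[OF ax_andI]]])

lemma or_elim: "\<turnstile> Imp H (Imp A C) \<Longrightarrow> \<turnstile> Imp H (Imp B C) \<Longrightarrow> \<turnstile> Imp H (Or A B) \<Longrightarrow> \<turnstile> Imp H C"
  by (rule imp_mp[OF imp_mp[OF imp_mp[OF imp_weaken[OF ax_orE]]]])

lemma deduction:
  assumes "\<turnstile> Imp (And H A) B"
  shows "\<turnstile> Imp H (Imp A B)"
proof -
  have "\<turnstile> Imp H (Imp A (Imp (And H A) B))"
    by (intro imp_weaken assms)
  then show ?thesis
    by (rule imp_mp[OF imp_mp[OF imp_weaken[OF ax_s]] ax_andI])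
qed

lemma box_K: "\<turnstile> Imp H (Box (Imp X Y)) \<Longrightarrow> \<turnstile> Imp H (Box X) \<Longrightarrow> \<turnstile> Imp H (Box Y)"
  by (rule imp_mp[OF imp_mp[OF imp_weaken[OF ax_K]]])

lemma box_mono: "\<turnstile> Imp X Y \<Longrightarrow> \<turnstile> Imp H (Box X) \<Longrightarrow> \<turnstile> Imp H (Box Y)"
  by (rule box_K[OF imp_weaken[OF nec]])

lemma box_and: "\<turnstile> Imp H (Box X) \<Longrightarrow> \<turnstile> Imp H (Box Y) \<Longrightarrow> \<turnstile> Imp H (Box (And X Y))"
  by (rule box_K[OF box_mono[OF ax_andI]])

lemma box_4: "\<turnstile> Imp H (Box X) \<Longrightarrow> \<turnstile> Imp H (Box (Box X))"
  using imp_trans ax_4 by blast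

lemma Iff_intro: "\<turnstile> Imp A B \<Longrightarrow> \<turnstile> Imp B A \<Longrightarrow> \<turnstile> Iff A B"
  unfolding Iff_def by (rule mp[OF mp[OF ax_andI]])

lemma Iff_D1: "\<turnstile> Iff A B \<Longrightarrow> \<turnstile> Imp A B"
  unfolding Iff_def by (rule mp[OF ax_and1])

lemma Iff_D2: "\<turnstile> Iff A B \<Longrightarrow> \<turnstile> Imp B A"
  unfolding Iff_def by (rule mp[OF ax_and2])

lemma Iff_refl: "\<turnstile> Iff A A"
  by (rule Iff_intro[OF imp_refl imp_refl])

lemma Iff_sym: "\<turnstile> Iff A B \<Longrightarrow> \<turnstile> Iff B A"
  using Iff_intro Iff_D1 Iff_D2 by blast

lemma Iff_trans [trans]: "\<turnstile> Iff A B \<Longrightarrow> \<turnstile> Iff B C \<Longrightarrow> \<turnstile> Iff A C"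
  using Iff_intro Iff_D1 Iff_D2 imp_trans by metis

lemma And_mono: "\<turnstile> Imp X X' \<Longrightarrow> \<turnstile> Imp Y Y' \<Longrightarrow> \<turnstile> Imp (And X Y) (And X' Y')"
  by (rule and_intro[OF imp_trans[OF and_elim1[OF imp_refl]] imp_trans[OF and_elim2[OF imp_refl]]])

lemma And_cong: "\<turnstile> Iff X X' \<Longrightarrow> \<turnstile> Iff Y Y' \<Longrightarrow> \<turnstile> Iff (And X Y) (And X' Y')"
  using Iff_intro Iff_D1 Iff_D2 And_mono by metis

lemma Or_mono: "\<turnstile> Imp X X' \<Longrightarrow> \<turnstile> Imp Y Y' \<Longrightarrow> \<turnstile> Imp (Or X Y) (Or X' Y')"
  by (rule or_elim[OF imp_weaken[OF imp_trans[OF _ ax_or1]] imp_weaken[OF imp_trans[OF _ ax_or2]] imp_refl])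

lemma Or_cong: "\<turnstile> Iff X X' \<Longrightarrow> \<turnstile> Iff Y Y' \<Longrightarrow> \<turnstile> Iff (Or X Y) (Or X' Y')"
  using Iff_intro Iff_D1 Iff_D2 Or_mono by metis

lemma Imp_mono:
  assumes "\<turnstile> Imp X' X" and "\<turnstile> Imp Y Y'"
  shows "\<turnstile> Imp (Imp X Y) (Imp X' Y')"
proof (rule deduction)
  have "\<turnstile> Imp (And (Imp X Y) X') Y"
    by (rule imp_mp[OF and_elim1[OF imp_refl] imp_trans[OF and_elim2[OF imp_refl] assms(1)]])
  then show "\<turnstile> Imp (And (Imp X Y) X') Y'"
    using assms(2) by (rule imp_trans)
qed

lemma Imp_cong: "\<turnstile> Iff X X' \<Longrightarrow> \<turnstile> Iff Y Y' \<Longrightarrow> \<turnstile> Iff (Imp X Y) (Imp X' Y')"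
  using Iff_intro Iff_D1 Iff_D2 Imp_mono by metis

lemma boxdot_intro: "\<turnstile> Imp H X \<Longrightarrow> \<turnstile> Imp H (Box X) \<Longrightarrow> \<turnstile> Imp H (boxdot X)"
  unfolding boxdot_def by (rule and_intro)

lemma boxdot_elim1: "\<turnstile> Imp H (boxdot X) \<Longrightarrow> \<turnstile> Imp H X"
  unfolding boxdot_def by (rule and_elim1)

lemma boxdot_elim2: "\<turnstile> Imp H (boxdot X) \<Longrightarrow> \<turnstile> Imp H (Box X)"
  unfolding boxdot_def by (rule and_elim2)

lemma boxdot_imp_Box_boxdot: "\<turnstile> Imp (boxdot X) (Box (boxdot X))"
  unfolding boxdot_def by (rule box_and[OF and_elim2[OF imp_refl] box_4[OF and_elim2[OF imp_refl]]])

lemma boxdot_iff_self: "\<turnstile> Imp X (Box X) \<Longrightarrow> \<turnstile> Iff (boxdot X) X"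
  unfolding boxdot_def by (rule Iff_intro[OF ax_and1 and_intro[OF imp_refl]])

lemma boxdot_mono: "\<turnstile> Imp X Y \<Longrightarrow> \<turnstile> Imp (boxdot X) (boxdot Y)"
  unfolding boxdot_def
  by (rule and_intro[OF imp_trans[OF and_elim1[OF imp_refl]] box_mono[OF _ and_elim2[OF imp_refl]]])

lemma boxdot_cong: "\<turnstile> Iff X Y \<Longrightarrow> \<turnstile> Iff (boxdot X) (boxdot Y)"
  using Iff_intro Iff_D1 Iff_D2 boxdot_mono by metis

lemma boxdot_boxdot_iff: "\<turnstile> Iff (boxdot (boxdot X)) (boxdot X)"
  by (rule boxdot_iff_self[OF boxdot_imp_Box_boxdot])

lemma imp_boxdot_of_boxdot: "\<turnstile> Imp (boxdot X) Y \<Longrightarrow> \<turnstile> Imp (boxdot X) (boxdot Y)"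
  unfolding boxdot_def[of Y]
  by (rule and_intro[OF _ box_mono[OF _ boxdot_imp_Box_boxdot]])

lemma boxdot_And_iff: "\<turnstile> Iff (boxdot (And X Y)) (And (boxdot X) (boxdot Y))"
proof (rule Iff_intro)
  show "\<turnstile> Imp (boxdot (And X Y)) (And (boxdot X) (boxdot Y))"
    by (rule and_intro[OF boxdot_mono[OF ax_and1] boxdot_mono[OF ax_and2]])
  show "\<turnstile> Imp (And (boxdot X) (boxdot Y)) (boxdot (And X Y))"
    unfolding boxdot_def
    by (rule and_intro[OF And_mono[OF ax_and1 ax_and1] box_and[OF and_elim2 and_elim2]])
       (rule and_elim1[OF imp_refl], rule and_elim2[OF imp_refl])
qed

lemma boxdot_Imp_imp_Imp_boxdot:
  assumes "\<turnstile> Imp A (Box A)"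
  shows "\<turnstile> Imp (boxdot (Imp A X)) (Imp A (boxdot X))"
proof (rule deduction)
  let ?H = "And (boxdot (Imp A X)) A"
  have A: "\<turnstile> Imp ?H A"
    by (rule and_elim2[OF imp_refl])
  have X: "\<turnstile> Imp ?H X"
    by (rule imp_mp[OF boxdot_elim1[OF and_elim1[OF imp_refl]] A])
  have Box_X: "\<turnstile> Imp ?H (Box X)"
    by (rule box_K[OF boxdot_elim2[OF and_elim1[OF imp_refl]] imp_trans[OF A assms]])
  show "\<turnstile> Imp ?H (boxdot X)"
    by (rule boxdot_intro[OF X Box_X])
qed

lemma boxtr_imp_Box_boxtr: "\<turnstile> Imp (boxtr A) (Box (boxtr A))"
proof (induction A)
  case (And A B)
  then show ?case
    by (simp, intro box_and imp_trans[OF and_elim1[OF imp_refl]] imp_trans[OF and_elim2[OF imp_refl]])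
next
  case (Or A B)
  have "\<turnstile> Imp (boxtr A) (Box (Or (boxtr A) (boxtr B)))"
    by (rule box_mono[OF ax_or1 Or(1)])
  moreover have "\<turnstile> Imp (boxtr B) (Box (Or (boxtr A) (boxtr B)))"
    by (rule box_mono[OF ax_or2 Or(2)])
  ultimately show ?case
    by (simp, intro or_elim[OF imp_weaken imp_weaken imp_refl])
next
  case (Box A)
  show ?case by (simp add: ax_4)
qed (use boxdot_imp_Box_boxdot in \<open>simp_all add: boxdot_def\<close>)

lemma boxdot_boxtr_iff: "\<turnstile> Iff (boxdot (boxtr A)) (boxtr A)"
  by (rule boxdot_iff_self[OF boxtr_imp_Box_boxtr])

lemma Box_iff_Box_boxtr:
  assumes leiv: "\<turnstile> Iff (boxdot (leiv A)) (boxdot (boxtr A))" and sound: "\<turnstile> Imp (boxtr A) A"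
  shows "\<turnstile> Iff (Box A) (Box (boxtr A))"
proof (rule Iff_intro)
  have "\<turnstile> Imp (Box A) (Box (boxdot (leiv A)))"
    unfolding boxdot_def by (rule box_and[OF ax_Le box_4[OF ax_Le]])
  then have "\<turnstile> Imp (Box A) (Box (boxdot (boxtr A)))"
    by (rule box_mono[OF Iff_D1[OF leiv]])
  then show "\<turnstile> Imp (Box A) (Box (boxtr A))"
    by (rule box_mono[OF Iff_D1[OF boxdot_boxtr_iff]])
  show "\<turnstile> Imp (Box (boxtr A)) (Box A)"
    by (rule box_mono[OF sound imp_refl])
qed

lemma leiv_atomic: "atomic A \<Longrightarrow> leiv A = A"
  by (cases A) simp_all

lemma boxtr_atomic: "atomic A \<Longrightarrow> boxtr A = boxdot A"
  by (cases A) (simp_all add: boxdot_def)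

lemma boxdot_leiv_iff_atomic:
  "atomic A \<Longrightarrow> \<turnstile> Iff (boxdot (leiv A)) (boxdot (boxtr A))"
  by (simp add: leiv_atomic boxtr_atomic Iff_sym[OF boxdot_boxdot_iff])

lemma boxtr_iff_atomic: "atomic A \<Longrightarrow> \<turnstile> Iff (boxtr A) A"
  by (simp add: boxtr_atomic boxdot_iff_self[OF ax_cp])

lemma boxdot_leiv_iff_And:
  assumes "\<turnstile> Iff (boxdot (leiv A)) (boxdot (boxtr A))" and "\<turnstile> Iff (boxdot (leiv B)) (boxdot (boxtr B))"
  shows "\<turnstile> Iff (boxdot (leiv (And A B))) (boxdot (boxtr (And A B)))"
  using Iff_trans[OF boxdot_And_iff Iff_trans[OF And_cong[OF assms] Iff_sym[OF boxdot_And_iff]]]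
  by simp

lemma boxdot_leiv_iff_Or:
  assumes "\<turnstile> Iff (boxdot (leiv A)) (boxdot (boxtr A))" and "\<turnstile> Iff (boxdot (leiv B)) (boxdot (boxtr B))"
  shows "\<turnstile> Iff (boxdot (leiv (Or A B))) (boxdot (boxtr (Or A B)))"
  using boxdot_cong[OF Or_cong[OF Iff_trans[OF assms(1) boxdot_boxtr_iff] Iff_trans[OF assms(2) boxdot_boxtr_iff]]]
  by simp

lemma boxdot_leiv_iff_Imp:
  assumes noi: "NOI A" and A: "\<turnstile> Iff (boxtr A) A"
    and B: "\<turnstile> Iff (boxdot (leiv B)) (boxdot (boxtr B))"
  shows "\<turnstile> Iff (boxdot (leiv (Imp A B))) (boxdot (boxtr (Imp A B)))"
proof -
  have B_leiv_boxtr: "\<turnstile> Iff (boxdot (leiv B)) (boxtr B)"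
    by (rule Iff_trans[OF B boxdot_boxtr_iff])
  have A_self_boxing: "\<turnstile> Imp A (Box A)"
    by (rule box_mono[OF Iff_D1[OF A] imp_trans[OF Iff_D2[OF A] boxtr_imp_Box_boxtr]])
  have "\<turnstile> Imp (boxdot (Imp A (leiv B))) (Imp A (boxtr B))"
    by (rule imp_trans[OF boxdot_Imp_imp_Imp_boxdot[OF A_self_boxing] Imp_mono[OF imp_refl Iff_D1[OF B_leiv_boxtr]]])
  moreover have "\<turnstile> Imp (Imp A (boxtr B)) (Imp A (leiv B))"
    by (rule Imp_mono[OF imp_refl boxdot_elim1[OF Iff_D2[OF B_leiv_boxtr]]])
  ultimately have "\<turnstile> Iff (boxdot (Imp A (leiv B))) (boxdot (Imp A (boxtr B)))"
    by (intro Iff_intro imp_boxdot_of_boxdot boxdot_mono)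
  also have "\<turnstile> Iff (boxdot (Imp A (boxtr B))) (boxdot (Imp (boxtr A) (boxtr B)))"
    by (rule boxdot_cong[OF Imp_cong[OF Iff_sym[OF A] Iff_refl]])
  also have "\<turnstile> Iff (boxdot (Imp (boxtr A) (boxtr B))) (boxdot (boxdot (Imp (boxtr A) (boxtr B))))"
    by (rule Iff_sym[OF boxdot_boxdot_iff])
  finally show ?thesis
    using noi by (simp add: boxdot_def)
qed

lemma TNNIL_boxtr:
  assumes "TNNIL A"
  shows "(\<turnstile> Iff (boxdot (leiv A)) (boxdot (boxtr A))) \<and> (\<turnstile> Imp (boxtr A) A) \<and>
         (NOI A \<longrightarrow> (\<turnstile> Iff (boxtr A) A))"
  using assms
proof (induction A rule: TNNIL.induct)
  case (tn_atom A)
  then show ?case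
    using boxdot_leiv_iff_atomic boxtr_iff_atomic Iff_D1 by blast
next
  case (tn_and A B)
  then show ?case
    using boxdot_leiv_iff_And[of A B] by (simp add: And_mono And_cong)
next
  case (tn_or A B)
  then show ?case
    using boxdot_leiv_iff_Or[of A B] by (simp add: Or_mono Or_cong)
next
  case (tn_box A)
  then have "\<turnstile> Iff (Box A) (Box (boxtr A))"
    using Box_iff_Box_boxtr by blast
  then show ?case
    by (simp add: boxdot_cong Iff_sym Iff_D2)
next
  case (tn_imp A B)
  then have "\<turnstile> Imp (boxtr (Imp A B)) (Imp (boxtr A) (boxtr B))"
    by (simp add: ax_and1)
  with tn_imp have "\<turnstile> Imp (boxtr (Imp A B)) (Imp A B)"
    by (meson Imp_mono Iff_D2 imp_trans)
  with tn_imp show ?case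
    using boxdot_leiv_iff_Imp[of A B] by simp
qed

theorem lemma4p21:
  assumes "TNNIL A"
  shows "LLe_plus (Iff (boxdot (leiv A)) (boxdot (boxtr A))) \<and>
         LLe_plus (Imp (boxtr A) A) \<and>
         (NOI A \<longrightarrow> LLe_plus (Iff (boxtr A) A)) \<and>
         LLe_plus (Iff (Box A) (Box (boxtr A)))"
  using TNNIL_boxtr[OF assms] Box_iff_Box_boxtr by blast

end
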